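(* Let $(G,\mathcal{C})$ be CER with respect to the ordering $(V_{\eta_1},\dots,V_{\eta_r})$. If $\{v,w\},\{v',w'\}\in\tilde E$ satisfy $c(v,w)=c(v',w')=k\in[r+R]\setminus F$, $\pi(v)\le\pi(w)$ and $\pi(v')\le\pi(w')$, then $c(v)=c(v')$.
   Context: $G=(V,E)$ finite simple undirected graph, $V=[p]$; coloring: vertex color classes $V_1,\dots,V_r$, edge color classes $E_{r+1},\dots,E_{r+R}$ partitioning $E$. $\tilde E=E\cup\{\{v\}:v\in V\}$, $E_i=\{\{v\}:v\in V_i\}$; $c(v,w)=k$ iff $\{v,w\}\in E_k$, $c(v)=c(v,v)$. $\pi(v)=i$ iff $v\in V_{\eta_i}$; $V_{\le i}=V_{\eta_1}\cup\dots\cup V_{\eta_i}$. $m_{v\to w}(k,h)=|\{u\in V_{\le\min(\pi(v),\pi(w))}: c(v,u)=k, c(u,w)=h\}|$, $m_{v\leftrightarrow w}(k,h)=m_{v\to w}(k,h)+m_{v\to w}(h,k)$. $F_i=\{c(v,w):\{v,w\}\in\tilde E,\ c(v)=c(w)=i\}$, $F=\bigcup_iF_i$. The ordering is a cpeo if every $v\in V_{\eta_i}$ is simplicial (neighbours form a clique) in $G[V_{\eta_i}\cup\dots\cup V_{\eta_r}]$. CER with respect to the ordering: cpeo and (M1): $c(v,w)=c(v',w')$ implies $m_{v\leftrightarrow w}=m_{v'\leftrightarrow w'}$. *)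

theory Defs
  imports Main
begin

(* A coloring is a function col on the sets in E~ = E \<union> {{v} | v \<in> V}:
   col {v} = c(v) is the vertex colour (in [r]), col {v,w} = c(v,w) the edge
   colour (in {r+1..r+R}). *)

definition Vset :: "nat \<Rightarrow> nat set" where
  "Vset p = {1..p}"

definition Etilde :: "nat \<Rightarrow> nat set set \<Rightarrow> nat set set" where
  "Etilde p E = E \<union> {{v} | v. v \<in> Vset p}"

definition colored_graph ::
  "nat \<Rightarrow> nat set set \<Rightarrow> nat \<Rightarrow> nat \<Rightarrow> (nat set \<Rightarrow> nat) \<Rightarrow> bool" where
  "colored_graph p E r R col \<longleftrightarrow>
     E \<subseteq> {{a, b} | a b. a \<in> Vset p \<and> b \<in> Vset p \<and> a \<noteq> b} \<and>
     (\<forall>v \<in> Vset p. col {v} \<in> {1..r}) \<and>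
     (\<forall>e \<in> E. col e \<in> {r+1..r+R}) \<and>
     (\<forall>i \<in> {1..r}. \<exists>v \<in> Vset p. col {v} = i) \<and>
     (\<forall>k \<in> {r+1..r+R}. \<exists>e \<in> E. col e = k)"

definition is_ordering :: "nat \<Rightarrow> (nat \<Rightarrow> nat) \<Rightarrow> bool" where
  "is_ordering r eta \<longleftrightarrow> bij_betw eta {1..r} {1..r}"

(* pi(v) = i iff v \<in> V_{eta i} *)
definition pos :: "nat \<Rightarrow> (nat \<Rightarrow> nat) \<Rightarrow> (nat set \<Rightarrow> nat) \<Rightarrow> nat \<Rightarrow> nat" where
  "pos r eta col v = inv_into {1..r} eta (col {v})"

definition m_to ::
  "nat \<Rightarrow> nat set set \<Rightarrow> nat \<Rightarrow> (nat \<Rightarrow> nat) \<Rightarrow> (nat set \<Rightarrow> nat)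
     \<Rightarrow> nat \<Rightarrow> nat \<Rightarrow> nat \<Rightarrow> nat \<Rightarrow> nat" where
  "m_to p E r eta col v w k h =
     card {u \<in> Vset p. pos r eta col u \<le> min (pos r eta col v) (pos r eta col w) \<and>
                     {v, u} \<in> Etilde p E \<and> col {v, u} = k \<and>
                     {u, w} \<in> Etilde p E \<and> col {u, w} = h}"

definition m_both ::
  "nat \<Rightarrow> nat set set \<Rightarrow> nat \<Rightarrow> (nat \<Rightarrow> nat) \<Rightarrow> (nat set \<Rightarrow> nat)
     \<Rightarrow> nat \<Rightarrow> nat \<Rightarrow> nat \<Rightarrow> nat \<Rightarrow> nat" where
  "m_both p E r eta col v w k h = m_to p E r eta col v w k h + m_to p E r eta col v w h k"

definition Fi :: "nat \<Rightarrow> nat set set \<Rightarrow> (nat set \<Rightarrow> nat) \<Rightarrow> nat \<Rightarrow> nat set" where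
  "Fi p E col i = {col {v, w} | v w. {v, w} \<in> Etilde p E \<and> col {v} = i \<and> col {w} = i}"

definition Fset :: "nat \<Rightarrow> nat set set \<Rightarrow> nat \<Rightarrow> (nat set \<Rightarrow> nat) \<Rightarrow> nat set" where
  "Fset p E r col = (\<Union>i \<in> {1..r}. Fi p E col i)"

(* colour-class perfect elimination ordering: every v \<in> V_{eta i} is simplicial
   in G[V_{eta i} \<union> ... \<union> V_{eta r}] *)
definition is_cpeo ::
  "nat \<Rightarrow> nat set set \<Rightarrow> nat \<Rightarrow> (nat \<Rightarrow> nat) \<Rightarrow> (nat set \<Rightarrow> nat) \<Rightarrow> bool" where
  "is_cpeo p E r eta col \<longleftrightarrow>
     (\<forall>v \<in> Vset p. \<forall>a \<in> Vset p. \<forall>b \<in> Vset p.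
        pos r eta col a \<ge> pos r eta col v \<and> pos r eta col b \<ge> pos r eta col v \<and>
        {v, a} \<in> E \<and> {v, b} \<in> E \<and> a \<noteq> b \<longrightarrow> {a, b} \<in> E)"

definition is_CER ::
  "nat \<Rightarrow> nat set set \<Rightarrow> nat \<Rightarrow> (nat \<Rightarrow> nat) \<Rightarrow> (nat set \<Rightarrow> nat) \<Rightarrow> bool" where
  "is_CER p E r eta col \<longleftrightarrow>
     is_cpeo p E r eta col \<and>
     (\<forall>v w v' w'. {v, w} \<in> Etilde p E \<longrightarrow> {v', w'} \<in> Etilde p E \<longrightarrow>
        col {v, w} = col {v', w'} \<longrightarrow>
        m_both p E r eta col v w = m_both p E r eta col v' w')"

end

theory Submission
  imports Defs
begin

(* Idea: the loop {v} witnesses m_{v->w}(c(v), k) > 0, so by (M1) also m_{v'<->w'}(c(v), k) > 0.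
   A vertex colour is carried only by loops, so the witness u is v' itself, or it is w' with
   pi(w') <= pi(v'); in the latter case v' and w' lie in the same colour class. *)

lemma colored_graph_Etilde_vertices:
  assumes "colored_graph p E r R col" and "{a, b} \<in> Etilde p E"
  shows "a \<in> Vset p" and "b \<in> Vset p"
  using assms unfolding colored_graph_def Etilde_def by (auto simp: doubleton_eq_iff)

lemma colored_graph_vertex_colour:
  assumes "colored_graph p E r R col" and "a \<in> Vset p"
  shows "col {a} \<in> {1..r}"
  using assms unfolding colored_graph_def by auto

lemma colored_graph_Etilde_loop:
  assumes "colored_graph p E r R col" and "{a, b} \<in> Etilde p E" and "col {a, b} \<le> r"
  shows "a = b"
proof (rule ccontr)
  assume "a \<noteq> b"
  then have "{a, b} \<in> E"
    using assms(2) unfolding Etilde_def by auto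
  then have "col {a, b} \<ge> r + 1"
    using assms(1) unfolding colored_graph_def by auto
  with assms(3) show False by simp
qed

lemma pos_eq_imp_vertex_colour_eq:
  assumes "is_ordering r eta" and "col {a} \<in> {1..r}" and "col {b} \<in> {1..r}"
    and "pos r eta col a = pos r eta col b"
  shows "col {a} = col {b}"
proof -
  have "inj_on (inv_into {1..r} eta) {1..r}"
    using assms(1) bij_betw_inv_into bij_betw_imp_inj_on unfolding is_ordering_def by blast
  then show ?thesis
    using assms(2-4) unfolding pos_def by (auto dest: inj_onD)
qed

lemma m_to_neq_0_iff:
  "m_to p E r eta col v w k h \<noteq> 0 \<longleftrightarrow>
     (\<exists>u \<in> Vset p. pos r eta col u \<le> min (pos r eta col v) (pos r eta col w) \<and>
        {v, u} \<in> Etilde p E \<and> col {v, u} = k \<and> {u, w} \<in> Etilde p E \<and> col {u, w} = h)"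
  unfolding m_to_def by (auto simp: Vset_def)

lemma m_to_loop_witness:
  assumes "colored_graph p E r R col" and "{v, w} \<in> Etilde p E"
    and "pos r eta col v \<le> pos r eta col w"
  shows "m_to p E r eta col v w (col {v}) (col {v, w}) \<noteq> 0"
proof -
  have "v \<in> Vset p"
    using colored_graph_Etilde_vertices[OF assms(1,2)] by simp
  then have "{v} \<in> Etilde p E"
    unfolding Etilde_def by auto
  with \<open>v \<in> Vset p\<close> assms(2,3) show ?thesis
    unfolding m_to_neq_0_iff by (intro bexI[of _ v]) auto
qed

lemma m_both_vertex_colour:
  assumes "colored_graph p E r R col" and "is_ordering r eta"
    and "{v, w} \<in> Etilde p E" and "pos r eta col v \<le> pos r eta col w"
    and "c \<in> {1..r}" and "m_both p E r eta col v w c h \<noteq> 0"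
  shows "col {v} = c"
proof -
  have v: "v \<in> Vset p" and w: "w \<in> Vset p"
    using colored_graph_Etilde_vertices[OF assms(1,3)] by simp_all
  consider "m_to p E r eta col v w c h \<noteq> 0" | "m_to p E r eta col v w h c \<noteq> 0"
    using assms(6) unfolding m_both_def by linarith
  then show ?thesis
  proof cases
    case 1
    then obtain u where "{v, u} \<in> Etilde p E" and "col {v, u} = c"
      unfolding m_to_neq_0_iff by blast
    moreover from this have "u = v"
      using colored_graph_Etilde_loop[OF assms(1)] assms(5) by auto
    ultimately show ?thesis by simp
  next
    case 2
    then obtain u where "pos r eta col u \<le> pos r eta col v"
      and "{u, w} \<in> Etilde p E" and "col {u, w} = c"
      unfolding m_to_neq_0_iff by auto
    moreover from this have "u = w"
      using colored_graph_Etilde_loop[OF assms(1)] assms(5) by auto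
    ultimately have "col {w} = c" and "pos r eta col w = pos r eta col v"
      using assms(4) by auto
    moreover have "col {w} = col {v}"
      using pos_eq_imp_vertex_colour_eq[OF assms(2)] colored_graph_vertex_colour[OF assms(1)] v w
        \<open>pos r eta col w = pos r eta col v\<close> by blast
    ultimately show ?thesis by simp
  qed
qed

theorem lemma7p7:
  fixes p r R k :: nat and E :: "nat set set" and col :: "nat set \<Rightarrow> nat"
    and eta :: "nat \<Rightarrow> nat" and v w v' w' :: nat
  assumes "colored_graph p E r R col"
    and "is_ordering r eta"
    and "is_CER p E r eta col"
    and "{v, w} \<in> Etilde p E" and "{v', w'} \<in> Etilde p E"
    and "col {v, w} = k" and "col {v', w'} = k"
    and "k \<in> {1..r+R} - Fset p E r col"
    and "pos r eta col v \<le> pos r eta col w"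
    and "pos r eta col v' \<le> pos r eta col w'"
  shows "col {v} = col {v'}"
proof -
  have "m_both p E r eta col v' w' = m_both p E r eta col v w"
    using assms(3-7) unfolding is_CER_def by metis
  moreover have "m_both p E r eta col v w (col {v}) k \<noteq> 0"
    using m_to_loop_witness[OF assms(1,4,9)] assms(6) unfolding m_both_def by simp
  moreover have "col {v} \<in> {1..r}"
    using colored_graph_vertex_colour[OF assms(1) colored_graph_Etilde_vertices(1)[OF assms(1,4)]] .
  ultimately show ?thesis
    using m_both_vertex_colour[OF assms(1,2,5,10)] by metis
qed

end
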